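(* For every integer $n\ge 3$, the crown graph of order $2n$ admits an optimal extended irregular dominating set.
   Context: For $n\ge3$, the crown graph of order $2n$ is $K_{n,n}$ with parts $\{a_1,\dots,a_n\}$, $\{b_1,\dots,b_n\}$ minus the perfect matching $\{\{a_i,b_i\}: 1\le i\le n\}$. In a finite simple graph $\Gamma=(V,E)$ with distance $d$, a vertex $v$ carrying a non-negative integer label $\ell$ dominates (covers) exactly the vertices $u$ with $d(u,v)=\ell$; a vertex labeled $0$ dominates only itself. For $k\ge 0$, a $k$-extended irregular dominating set is a set $S\subseteq V$ of $k$ vertices with a labeling $\lambda:S\to\mathbb{Z}_{\ge0}$ with distinct labels, such that every vertex of $V$ is dominated by some vertex of $S$; it is assumed that some vertex of $S$ has label $0$. $\gamma_e(\Gamma)$ is the minimum cardinality of such a set, and a $k$-extended irregular dominating set is optimal if $k=\gamma_e(\Gamma)$. *)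

theory Defs
  imports Main
begin

(* A graph is given by a vertex set V and a symmetric irreflexive adjacency relation E. *)

fun walk_len :: "'a set \<Rightarrow> ('a \<Rightarrow> 'a \<Rightarrow> bool) \<Rightarrow> nat \<Rightarrow> 'a \<Rightarrow> 'a \<Rightarrow> bool" where
  "walk_len V E 0 u v \<longleftrightarrow> u = v \<and> u \<in> V"
| "walk_len V E (Suc k) u v \<longleftrightarrow> u \<in> V \<and> (\<exists>w\<in>V. E u w \<and> walk_len V E k w v)"

(* graph distance d(u,v) equals k (never holds if u,v are in different components) *)
definition dist_eq :: "'a set \<Rightarrow> ('a \<Rightarrow> 'a \<Rightarrow> bool) \<Rightarrow> 'a \<Rightarrow> 'a \<Rightarrow> nat \<Rightarrow> bool" where
  "dist_eq V E u v k \<longleftrightarrow> walk_len V E k u v \<and> (\<forall>j<k. \<not> walk_len V E j u v)"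

definition dominates :: "'a set \<Rightarrow> ('a \<Rightarrow> 'a \<Rightarrow> bool) \<Rightarrow> ('a \<Rightarrow> nat) \<Rightarrow> 'a \<Rightarrow> 'a \<Rightarrow> bool" where
  "dominates V E lam v u \<longleftrightarrow> dist_eq V E u v (lam v)"

definition ext_irr_dom :: "'a set \<Rightarrow> ('a \<Rightarrow> 'a \<Rightarrow> bool) \<Rightarrow> 'a set \<Rightarrow> ('a \<Rightarrow> nat) \<Rightarrow> bool" where
  "ext_irr_dom V E S lam \<longleftrightarrow> S \<subseteq> V \<and> inj_on lam S \<and> (\<exists>v\<in>S. lam v = 0)
     \<and> (\<forall>u\<in>V. \<exists>v\<in>S. dominates V E lam v u)"

definition gamma_e :: "'a set \<Rightarrow> ('a \<Rightarrow> 'a \<Rightarrow> bool) \<Rightarrow> nat" where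
  "gamma_e V E = (LEAST k. \<exists>S lam. ext_irr_dom V E S lam \<and> card S = k)"

definition optimal_ext_irr_dom :: "'a set \<Rightarrow> ('a \<Rightarrow> 'a \<Rightarrow> bool) \<Rightarrow> 'a set \<Rightarrow> ('a \<Rightarrow> nat) \<Rightarrow> bool" where
  "optimal_ext_irr_dom V E S lam \<longleftrightarrow> ext_irr_dom V E S lam \<and> card S = gamma_e V E"

(* Crown graph of order 2n: a_i = (i, False), b_i = (i, True), i \<in> {1..n};
   a_i ~ b_j iff i \<noteq> j *)
definition crown_V :: "nat \<Rightarrow> (nat \<times> bool) set" where
  "crown_V n = {1..n} \<times> UNIV"

definition crown_E :: "nat \<Rightarrow> nat \<times> bool \<Rightarrow> nat \<times> bool \<Rightarrow> bool" where
  "crown_E n x y \<longleftrightarrow> x \<in> crown_V n \<and> y \<in> crown_V n \<and> snd x \<noteq> snd y \<and> fst x \<noteq> fst y"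

end

theory Submission
  imports Defs
begin

(* Walks in the bipartite crown graph alternate sides, so walks between vertices on the same
   side have even length and walks across have odd length.  Since n \<ge> 3 leaves a third index
   for detours, this gives d(a_i, b_j) = 1 and d(a_i, a_j) = 2 for i \<noteq> j, and d(a_i, b_i) = 3.
   Hence a_1, b_1, a_2, b_2 labelled 2, 3, 1, 0 dominate everything: b_2 itself, every other b_j
   from a_2, a_1 from b_1 and every other a_i from a_1.  An optimal set then exists because
   gamma_e is a least element of the nonempty set of sizes. *)

lemma ext_irr_dom_imp_optimal:
  assumes "ext_irr_dom V E S lam"
  shows "\<exists>S' lam'. optimal_ext_irr_dom V E S' lam'"
proof -
  let ?size = "\<lambda>k. \<exists>S lam. ext_irr_dom V E S lam \<and> card S = k"
  have "?size (card S)" using assms by blast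
  then have "?size (LEAST k. ?size k)" by (rule LeastI)
  then show ?thesis unfolding optimal_ext_irr_dom_def gamma_e_def by blast
qed

lemma crown_E_iff:
  "crown_E n (i, b) (j, c) \<longleftrightarrow> i \<in> {1..n} \<and> j \<in> {1..n} \<and> b \<noteq> c \<and> i \<noteq> j"
  by (auto simp: crown_E_def crown_V_def)

lemma crown_V_iff: "(i, b) \<in> crown_V n \<longleftrightarrow> i \<in> {1..n}"
  by (simp add: crown_V_def)

lemma walk_len_crown_parity:
  assumes "walk_len (crown_V n) (crown_E n) k (i, b) (j, c)"
  shows "b = c \<longleftrightarrow> even k"
  using assms
proof (induction k arbitrary: i b)
  case (Suc k)
  then obtain i' b' where edge: "crown_E n (i, b) (i', b')"
    and walk: "walk_len (crown_V n) (crown_E n) k (i', b') (j, c)"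
    by auto
  from edge have "b' = (\<not> b)" by (auto simp: crown_E_def)
  with Suc.IH[OF walk] show ?case by auto
qed simp

lemma exists_index_avoiding:
  assumes "n \<ge> 3"
  obtains k where "k \<in> {1..n}" "k \<noteq> i" "k \<noteq> (j::nat)"
proof -
  have "\<exists>k::nat. k \<in> {1, 2, 3} \<and> k \<noteq> i \<and> k \<noteq> j" by (simp; presburger)
  then obtain k where "k \<in> {1, 2, 3}" "k \<noteq> i" "k \<noteq> j" by blast
  with assms show thesis by (intro that[of k]) auto
qed

lemma dist_eq_crown:
  assumes n: "n \<ge> 3" and i: "i \<in> {1..n}" and j: "j \<in> {1..n}"
  shows "dist_eq (crown_V n) (crown_E n) (i, b) (j, c)
           (if b = c then (if i = j then 0 else 2) else (if i = j then 3 else 1))"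
    (is "dist_eq ?V ?E _ _ ?d")
proof -
  have walk: "walk_len ?V ?E ?d (i, b) (j, c)"
  proof -
    obtain k where k: "k \<in> {1..n}" "k \<noteq> i" "k \<noteq> j"
      using exists_index_avoiding[OF n] by blast
    obtain l where l: "l \<in> {1..n}" "l \<noteq> i" "l \<noteq> k"
      using exists_index_avoiding[OF n] by blast
    consider "b = c" "i = j" | "b = c" "i \<noteq> j" | "c = (\<not> b)" "i = j" | "c = (\<not> b)" "i \<noteq> j"
      by blast
    then show ?thesis
    proof cases
      case 2
      have "crown_E n (i, b) (k, \<not> b)" "crown_E n (k, \<not> b) (j, b)"
        using i j k by (auto simp: crown_E_iff)
      with 2 i j k show ?thesis
        by (simp add: numeral_eq_Suc crown_V_def) (meson atLeastAtMost_iff)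
    next
      case 3
      have "crown_E n (i, b) (l, \<not> b)" "crown_E n (l, \<not> b) (k, b)" "crown_E n (k, b) (i, \<not> b)"
        using i k l by (auto simp: crown_E_iff)
      with 3 i k l show ?thesis
        by (simp add: numeral_eq_Suc crown_V_def) (meson atLeastAtMost_iff)
    qed (use i j in \<open>auto simp: crown_E_iff crown_V_iff\<close>)
  qed
  have no_shorter: "\<not> walk_len ?V ?E m (i, b) (j, c)" if "m < ?d" for m
  proof
    assume short: "walk_len ?V ?E m (i, b) (j, c)"
    from walk_len_crown_parity[OF this] that have "m = 0 \<or> (b \<noteq> c \<and> i = j \<and> m = 1)"
      by (auto split: if_splits elim: oddE)
    with short that show False by (auto split: if_splits simp: crown_E_iff)
  qed
  from walk no_shorter show ?thesis unfolding dist_eq_def by blast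
qed

lemma crown_ext_irr_dom:
  assumes n: "n \<ge> 3"
  shows "ext_irr_dom (crown_V n) (crown_E n) {(1, False), (1, True), (2, False), (2, True)}
     (\<lambda>v. if v = (1, False) then 2 else if v = (1, True) then 3 else if v = (2, False) then 1 else 0)"
    (is "ext_irr_dom ?V ?E ?S ?lam")
proof -
  have "\<exists>v\<in>?S. dominates ?V ?E ?lam v (i, b)" if "i \<in> {1..n}" for i b
  proof -
    have dist: "dist_eq ?V ?E (i, b) (j, c)
        (if b = c then (if i = j then 0 else 2) else (if i = j then 3 else 1))" if "j \<in> {1, 2}" for j c
      using dist_eq_crown[OF n \<open>i \<in> {1..n}\<close>, of j b c] that n by auto
    show ?thesis
      using dist[of 1 True] dist[of 1 False] dist[of 2 True] dist[of 2 False]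
      by (cases b; cases "i = 1"; cases "i = 2") (auto simp: dominates_def)
  qed
  with n show ?thesis
    by (auto simp: ext_irr_dom_def inj_on_def crown_V_def)
qed

theorem proposition3p2:
  fixes n :: nat
  assumes "n \<ge> 3"
  shows "\<exists>S lam. optimal_ext_irr_dom (crown_V n) (crown_E n) S lam"
  using ext_irr_dom_imp_optimal[OF crown_ext_irr_dom[OF assms]] .

end
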